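(* For every $z\in\mathbb{C}\setminus[0,\infty)$ and every $x\in\mathbb{Z}_+$, $$\psi_z(x)=e^{-z}\sum_{k=0}^{x}(-1)^k\binom{x}{k}E_{k+1}(-z).$$
   Context: $\mathbb{Z}_+=\{0,1,2,\dots\}$. $L_0$ is the operator on $\ell^2(\mathbb{Z}_+)$ given by $$L_0v(x)=-(x+1)v(x+1)+(2x+1)v(x)-xv(x-1)\quad (x>0),\qquad L_0v(0)=-v(1)+v(0),$$ with domain $\{v:\sum_x x^2|v(x)|^2<\infty\}$. $\overline{L_0}$ is its self-adjoint closure, whose spectrum is $[0,\infty)$. $\chi_0$ is the indicator of the site $0$, and $\psi_z:=(\overline{L_0}-z)^{-1}\chi_0$ is the resolvent vector. For $p\in\mathbb{C}$ and $w\in\mathbb{C}\setminus(-\infty,0]$, the generalized exponential integral is $E_p(w)=w^{p-1}\int_w^\infty e^{-t}t^{-p}\,\mathrm{d}t$, taken on the principal branch with cut $(-\infty,0]$. *)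

theory Defs
  imports "HOL-Analysis.Analysis"
begin

definition in_l2 :: "(nat \<Rightarrow> complex) \<Rightarrow> bool" where
  "in_l2 v \<longleftrightarrow> summable (\<lambda>x. (norm (v x))^2)"

definition l2_norm2 :: "(nat \<Rightarrow> complex) \<Rightarrow> real" where
  "l2_norm2 v = (\<Sum>x. (norm (v x))^2)"

definition L0 :: "(nat \<Rightarrow> complex) \<Rightarrow> nat \<Rightarrow> complex" where
  "L0 v x = (if x = 0 then - v 1 + v 0
             else - of_nat (x+1) * v (x+1) + of_nat (2*x+1) * v x - of_nat x * v (x-1))"

definition L0_dom :: "(nat \<Rightarrow> complex) set" where
  "L0_dom = {v. in_l2 v \<and> summable (\<lambda>x. (real x)^2 * (norm (v x))^2)}"

definition L0_closure_graph :: "(nat \<Rightarrow> complex) \<Rightarrow> (nat \<Rightarrow> complex) \<Rightarrow> bool" where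
  "L0_closure_graph v w \<longleftrightarrow> in_l2 v \<and> in_l2 w \<and>
     (\<exists>u :: nat \<Rightarrow> nat \<Rightarrow> complex. (\<forall>n. u n \<in> L0_dom) \<and>
        (\<lambda>n. l2_norm2 (\<lambda>x. u n x - v x)) \<longlonglongrightarrow> 0 \<and>
        (\<lambda>n. l2_norm2 (\<lambda>x. L0 (u n) x - w x)) \<longlonglongrightarrow> 0)"

definition chi0 :: "nat \<Rightarrow> complex" where
  "chi0 x = (if x = 0 then 1 else 0)"

text \<open>Resolvent vector psi_z = (closure L0 - z)^{-1} chi0, i.e. the unique v with
  closure(L0) v = chi0 + z v.\<close>

definition psi :: "complex \<Rightarrow> nat \<Rightarrow> complex" where
  "psi z = (THE v. L0_closure_graph v (\<lambda>x. chi0 x + z * v x))"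

text \<open>Generalized exponential integral E_p(w) = w^(p-1) \<integral>_w^\<infinity> e^(-t) t^(-p) dt,
  principal branch, integrating along the horizontal ray t = w + s, s \<ge> 0
  (which avoids the cut (-\<infinity>,0] whenever w does).\<close>

definition expint_E :: "complex \<Rightarrow> complex \<Rightarrow> complex" where
  "expint_E p w = w powr (p - 1) *
     integral {0..} (\<lambda>s::real. exp (- (w + of_real s)) * (w + of_real s) powr (- p))"

end

theory Submission
  imports Defs "HOL-Real_Asymp.Real_Asymp"
begin

text \<open>
  The resolvent vector is the integral
  \<open>\<psi>\<^sub>z(x) = \<integral>\<^sub>0\<^sup>\<infinity> e\<^sup>-\<^sup>t t\<^sup>x / (t - z)\<^sup>x\<^sup>+\<^sup>1 dt\<close>: expanding \<open>t\<^sup>x = ((t - z) + z)\<^sup>x\<close>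
  binomially turns it into the stated combination of exponential integrals. Differentiating
  \<open>z e\<^sup>-\<^sup>t t\<^sup>x / (t - z)\<^sup>x\<^sup>+\<^sup>1\<close> shows that the integral solves \<open>L\<^sub>0 v = \<chi>\<^sub>0 + z v\<close>.
  The Laguerre coefficients \<open>\<integral> L\<^sub>x(t) e\<^sup>-\<^sup>t / (t - z) dt\<close> of the bounded function
  \<open>1 / (t - z)\<close> solve the same recurrence with the same initial value, so the integral is
  square-summable by Bessel's inequality. Cutting it off to finite support shows that it lies in
  the domain of the closure, and the solution there is unique since
  \<open>\<langle>u, L\<^sub>0 u\<rangle> = \<Sum>\<^sub>y (y + 1) |u(y) - u(y + 1)|\<^sup>2 \<ge> 0\<close> leaves no eigenvector for \<open>z \<notin> [0, \<infinity>)\<close>.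
\<close>

section \<open>Integrals over the half-line\<close>

lemma has_integral_power_mult_exp_neg:
  "((\<lambda>t::real. t ^ k * exp (- t)) has_integral fact k) {0..}"
proof -
  have "((\<lambda>t. t powr (real (Suc k) - 1) / exp t) has_integral Gamma (real (Suc k))) {0..}"
    by (rule Gamma_integral_real) simp
  moreover have "Gamma (real (Suc k)) = fact k"
    using Gamma_fact[of k] by (simp add: add.commute)
  ultimately have Gamma: "((\<lambda>t. t powr (real k) / exp t) has_integral fact k) {0..}"
    by simp
  show ?thesis
  proof (rule has_integral_spike_finite[of "{0}" _ _ "\<lambda>t. t powr (real k) / exp t"])
    fix t :: real
    assume "t \<in> {0..} - {0}"
    then show "t ^ k * exp (- t) = t powr real k / exp t"
      by (simp add: powr_realpow exp_minus divide_inverse)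
  qed (use Gamma in auto)
qed

lemma integrable_one_plus_power_mult_exp_neg:
  "(\<lambda>t::real. (1 + t) ^ n * exp (- t)) integrable_on {0..}"
proof -
  have "(\<lambda>t::real. \<Sum>k\<le>n. of_nat (n choose k) * (t ^ k * exp (- t))) integrable_on {0..}"
    by (intro integrable_sum integrable_on_mult_right finite_atMost
        has_integral_integrable[OF has_integral_power_mult_exp_neg])
  moreover have "(\<Sum>k\<le>n. of_nat (n choose k) * (t ^ k * exp (- t))) = (1 + t) ^ n * exp (- t)"
    for t :: real
  proof -
    have "(1 + t) ^ n = (\<Sum>k\<le>n. of_nat (n choose k) * t ^ k)"
      using binomial_ring[of t 1 n] by (simp add: add.commute mult.commute)
    then show ?thesis
      by (simp add: sum_distrib_right mult.assoc)
  qed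
  ultimately show ?thesis
    by simp
qed

lemma absolutely_integrable_if_exp_dominated:
  fixes f :: "real \<Rightarrow> 'a::euclidean_space"
  assumes "continuous_on {0..} f"
    and "\<And>t. t \<ge> 0 \<Longrightarrow> norm (f t) \<le> C * ((1 + t) ^ n * exp (- t))"
  shows "f absolutely_integrable_on {0..}"
proof (rule measurable_bounded_by_integrable_imp_absolutely_integrable)
  show "f \<in> borel_measurable (lebesgue_on {0..})"
    by (rule continuous_imp_measurable_on_sets_lebesgue) (use assms in auto)
  show "(\<lambda>t. C * ((1 + t) ^ n * exp (- t))) integrable_on {0..}"
    by (rule integrable_on_mult_right[OF integrable_one_plus_power_mult_exp_neg])
qed (use assms in auto)

lemma integrable_if_exp_dominated:
  fixes f :: "real \<Rightarrow> 'a::euclidean_space"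
  assumes "continuous_on {0..} f"
    and "\<And>t. t \<ge> 0 \<Longrightarrow> norm (f t) \<le> C * ((1 + t) ^ n * exp (- t))"
  shows "f integrable_on {0..}"
  using absolutely_integrable_if_exp_dominated[OF assms] absolutely_integrable_on_def by blast

lemma integral_linear_combination3:
  fixes f g h :: "real \<Rightarrow> 'a::{real_normed_field,banach}"
  assumes "f integrable_on S" "g integrable_on S" "h integrable_on S"
  shows "integral S (\<lambda>t. a * f t + b * g t - c * h t) = a * integral S f + b * integral S g - c * integral S h"
  using assms by (simp add: integral_add integral_diff integrable_add integrable_on_mult_right)

lemma improper_fundamental_theorem_of_calculus:
  fixes f F :: "real \<Rightarrow> 'a::euclidean_space"
  assumes f: "f absolutely_integrable_on {0..}"
    and cont: "continuous_on {0..} F"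
    and deriv: "\<And>t. t > 0 \<Longrightarrow> (F has_vector_derivative f t) (at t)"
    and lim: "(F \<longlongrightarrow> 0) at_top"
  shows "(f has_integral - F 0) {0..}"
proof -
  define f_trunc where "f_trunc k t = (if t \<in> {0..real k} then f t else 0)" for k :: nat and t
  have trunc: "(f_trunc k has_integral F (real k) - F 0) {0..}" for k
  proof -
    have "(f has_integral F (real k) - F 0) {0..real k}"
      by (rule fundamental_theorem_of_calculus_interior)
         (auto intro: deriv continuous_on_subset[OF cont])
    then show ?thesis
      unfolding f_trunc_def by (subst has_integral_restrict) auto
  qed
  have dominated: "\<forall>t\<in>{0..}. norm (f_trunc k t) \<le> norm (f t)" for k
    by (auto simp: f_trunc_def)
  have pointwise: "\<forall>t\<in>{0..}. (\<lambda>k. f_trunc k t) \<longlonglongrightarrow> f t"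
  proof
    fix t :: real
    assume t: "t \<in> {0..}"
    have "eventually (\<lambda>k. real k \<ge> t) sequentially"
      by (meson eventually_sequentiallyI nat_ceiling_le_eq)
    then have "eventually (\<lambda>k. f_trunc k t = f t) sequentially"
      by eventually_elim (use t in \<open>auto simp: f_trunc_def\<close>)
    then show "(\<lambda>k. f_trunc k t) \<longlonglongrightarrow> f t"
      by (rule tendsto_eventually)
  qed
  have "(\<lambda>k. F (real k) - F 0) \<longlonglongrightarrow> 0 - F 0"
    using filterlim_compose[OF lim filterlim_real_sequentially] by (intro tendsto_intros)
  then have "(f has_integral 0 - F 0) {0..}"
    using f absolutely_integrable_on_def
    by (blast intro: has_integral_dominated_convergence[OF trunc _ dominated pointwise])
  then show ?thesis
    by simp
qed

section \<open>The integral representation\<close>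

lemma L0_eq: "L0 v x = - of_nat (x + 1) * v (x + 1) + of_nat (2 * x + 1) * v x - of_nat x * v (x - 1)"
  by (simp add: L0_def)

lemma L0_diff: "L0 (\<lambda>x. u x - v x) x = L0 u x - L0 v x"
  by (simp add: L0_def algebra_simps)

lemma L0_solution_unique:
  fixes f g :: "nat \<Rightarrow> complex"
  assumes "\<And>x. L0 f x - z * f x = L0 g x - z * g x" and "f 0 = g 0"
  shows "f = g"
proof -
  have step: "f (x + 1) = g (x + 1)" if "f x = g x" "f (x - 1) = g (x - 1)" for x
  proof -
    have "of_nat (x + 1) * f (x + 1) = of_nat (x + 1) * g (x + 1)"
      using assms(1)[of x] that by (simp add: L0_eq algebra_simps)
    then show ?thesis
      by (simp del: of_nat_Suc)
  qed
  have "f n = g n \<and> f (n + 1) = g (n + 1)" for n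
    by (induction n) (use assms(2) step in \<open>force+\<close>)
  then show ?thesis
    by blast
qed

lemma of_real_atLeast_0_eq_nonneg_Reals: "complex_of_real ` {0..} = \<real>\<^sub>\<ge>\<^sub>0"
  by (auto simp: nonneg_Reals_def)

lemma half_line_dist_bound:
  assumes "z \<notin> complex_of_real ` {0..}"
  obtains \<delta> where "\<delta> > 0" "\<And>t. t \<ge> 0 \<Longrightarrow> \<delta> \<le> norm (of_real t - z)"
proof -
  obtain \<delta> where "\<delta> > 0" and \<delta>: "\<forall>w\<in>\<real>\<^sub>\<ge>\<^sub>0. \<delta> \<le> dist z w"
    using separate_point_closed[OF closed_nonneg_Reals_complex, of z] assms
    unfolding of_real_atLeast_0_eq_nonneg_Reals by blast
  have "\<delta> \<le> norm (of_real t - z)" if "t \<ge> 0" for t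
    using \<delta> that by (auto simp: dist_norm norm_minus_commute)
  with \<open>\<delta> > 0\<close> show ?thesis
    by (rule that)
qed

definition psi_kernel :: "complex \<Rightarrow> nat \<Rightarrow> nat \<Rightarrow> real \<Rightarrow> complex" where
  "psi_kernel z a b t = exp (- of_real t) * of_real t ^ a / (of_real t - z) ^ b"

definition psi_integral :: "complex \<Rightarrow> nat \<Rightarrow> complex" where
  "psi_integral z x = integral {0..} (psi_kernel z x (x + 1))"

lemma continuous_on_psi_kernel:
  "z \<notin> complex_of_real ` {0..} \<Longrightarrow> continuous_on {0..} (psi_kernel z a b)"
  unfolding psi_kernel_def by (intro continuous_intros) auto

lemma norm_psi_kernel_le:
  assumes "\<delta> > 0" and dist: "\<And>t. t \<ge> 0 \<Longrightarrow> \<delta> \<le> norm (of_real t - z)" and "t \<ge> 0"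
  shows "norm (psi_kernel z a b t) \<le> 1 / \<delta> ^ b * ((1 + t) ^ a * exp (- t))"
proof -
  have "norm (psi_kernel z a b t) = exp (- t) * t ^ a / norm (of_real t - z) ^ b"
    using \<open>t \<ge> 0\<close> by (simp add: psi_kernel_def norm_mult norm_divide norm_power norm_exp_eq_Re)
  also have "\<dots> \<le> exp (- t) * t ^ a / \<delta> ^ b"
  proof -
    have "0 < norm (of_real t - z)"
      using assms(1) dist[OF \<open>t \<ge> 0\<close>] by linarith
    then show ?thesis
      using assms dist[OF \<open>t \<ge> 0\<close>] by (intro divide_left_mono power_mono mult_pos_pos zero_less_power) auto
  qed
  also have "\<dots> \<le> exp (- t) * (1 + t) ^ a / \<delta> ^ b"
    using assms by (intro divide_right_mono mult_left_mono power_mono) auto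
  finally show ?thesis
    by (simp add: field_simps)
qed

lemma absolutely_integrable_psi_kernel:
  assumes z: "z \<notin> complex_of_real ` {0..}"
  shows "psi_kernel z a b absolutely_integrable_on {0..}"
proof -
  obtain \<delta> where "\<delta> > 0" "\<And>t. t \<ge> 0 \<Longrightarrow> \<delta> \<le> norm (of_real t - z)"
    using half_line_dist_bound[OF z] by blast
  then show ?thesis
    by (intro absolutely_integrable_if_exp_dominated[where C = "1 / \<delta> ^ b" and n = a]
        continuous_on_psi_kernel z norm_psi_kernel_le)
qed

lemma integrable_psi_kernel:
  "z \<notin> complex_of_real ` {0..} \<Longrightarrow> psi_kernel z a b integrable_on {0..}"
  using absolutely_integrable_psi_kernel absolutely_integrable_on_def by blast

lemma expint_E_eq_psi_kernel_integral:
  assumes z: "z \<notin> complex_of_real ` {0..}"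
  shows "expint_E (of_nat (k + 1)) (- z) = (- z) ^ k * exp z * integral {0..} (psi_kernel z 0 (k + 1))"
proof -
  have "z \<noteq> 0"
    using z by force
  then have "(- z) powr (of_nat (k + 1) - 1) = (- z) ^ k"
    by (simp add: powr_nat')
  moreover have "integral {0..} (\<lambda>s. exp (- (- z + of_real s)) * (- z + of_real s) powr (- of_nat (k + 1)))
      = integral {0..} (\<lambda>s. exp z * psi_kernel z 0 (k + 1) s)"
  proof (rule integral_cong)
    fix s :: real
    assume "s \<in> {0..}"
    then have "of_real s - z \<noteq> 0"
      using z by auto
    then have "(- z + of_real s) powr (- of_nat (k + 1)) = inverse ((of_real s - z) ^ (k + 1))"
      by (simp add: powr_minus powr_nat' del: of_nat_Suc)
    then show "exp (- (- z + of_real s)) * (- z + of_real s) powr (- of_nat (k + 1))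
        = exp z * psi_kernel z 0 (k + 1) s"
      by (simp add: psi_kernel_def exp_add exp_diff exp_minus divide_inverse mult_ac del: of_nat_Suc)
  qed
  ultimately show ?thesis
    unfolding expint_E_def by (simp del: of_nat_Suc)
qed

lemma sum_binomial_psi_kernel:
  assumes "of_real t \<noteq> z"
  shows "(\<Sum>k\<le>x. of_nat (x choose k) * z ^ k * psi_kernel z 0 (k + 1) t) = psi_kernel z x (x + 1) t"
proof -
  let ?w = "complex_of_real t"
  have "(\<Sum>k\<le>x. of_nat (x choose k) * z ^ k * psi_kernel z 0 (k + 1) t)
      = exp (- ?w) / (?w - z) * (\<Sum>k\<le>x. of_nat (x choose k) * (z / (?w - z)) ^ k * 1 ^ (x - k))"
    by (simp add: sum_distrib_left psi_kernel_def power_divide field_simps)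
  also have "\<dots> = exp (- ?w) / (?w - z) * (z / (?w - z) + 1) ^ x"
    by (simp only: binomial_ring)
  also have "z / (?w - z) + 1 = ?w / (?w - z)"
    using assms by (simp add: field_simps)
  finally show ?thesis
    by (simp add: psi_kernel_def power_divide field_simps)
qed

lemma expint_sum_eq_psi_integral:
  assumes z: "z \<notin> complex_of_real ` {0..}"
  shows "exp (- z) * (\<Sum>k\<le>x. (-1) ^ k * of_nat (x choose k) * expint_E (of_nat (k + 1)) (- z))
    = psi_integral z x"
proof -
  have "exp (- z) * (\<Sum>k\<le>x. (-1) ^ k * of_nat (x choose k) * expint_E (of_nat (k + 1)) (- z))
      = (\<Sum>k\<le>x. of_nat (x choose k) * z ^ k * integral {0..} (psi_kernel z 0 (k + 1)))"
    unfolding sum_distrib_left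
  proof (rule sum.cong[OF refl])
    fix k
    have "exp (- z) * exp z = 1" "(-1::complex) ^ k * (-1) ^ k = 1"
      by (simp_all add: exp_minus flip: power_mult_distrib)
    then show "exp (- z) * ((-1) ^ k * of_nat (x choose k) * expint_E (of_nat (k + 1)) (- z))
        = of_nat (x choose k) * z ^ k * integral {0..} (psi_kernel z 0 (k + 1))"
      unfolding expint_E_eq_psi_kernel_integral[OF z] power_minus[of z k]
      by (simp add: mult_ac)
  qed
  also have "\<dots> = integral {0..} (\<lambda>t. \<Sum>k\<le>x. of_nat (x choose k) * z ^ k * psi_kernel z 0 (k + 1) t)"
    by (subst integral_sum) (auto intro: integrable_on_mult_right integrable_psi_kernel[OF z])
  also have "\<dots> = psi_integral z x"
    unfolding psi_integral_def
    by (rule integral_cong, rule sum_binomial_psi_kernel) (use z in auto)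
  finally show ?thesis .
qed

lemma psi_kernel_has_vector_derivative:
  assumes "complex_of_real t \<noteq> z"
  shows "((\<lambda>t. z * psi_kernel z x (x + 1) t) has_vector_derivative
     - of_nat (x + 1) * psi_kernel z (x + 1) (x + 2) t + (of_nat (2 * x + 1) - z) * psi_kernel z x (x + 1) t
     - of_nat x * psi_kernel z (x - 1) x t) (at t)"
proof -
  define w where "w = complex_of_real t"
  obtain r where wr: "w = z + r" and r: "r \<noteq> 0"
    using assms by (intro that[of "w - z"]) (auto simp: w_def)
  have deriv: "((\<lambda>w. exp (- w) * w ^ x / (w - z) ^ (x + 1)) has_field_derivative
      exp (- w) * (of_nat x * w ^ (x - 1) - w ^ x) / (w - z) ^ (x + 1)
      - of_nat (x + 1) * exp (- w) * w ^ x / (w - z) ^ (x + 2)) (at w)"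
    by (rule DERIV_cong, (rule derivative_intros)+) (use r in \<open>simp_all add: wr field_simps\<close>)
  have recurrence: "z * (exp (- w) * (of_nat x * w ^ (x - 1) - w ^ x) / (w - z) ^ (x + 1)
      - of_nat (x + 1) * exp (- w) * w ^ x / (w - z) ^ (x + 2))
    = - of_nat (x + 1) * (exp (- w) * w ^ (x + 1) / (w - z) ^ (x + 2))
      + (of_nat (2 * x + 1) - z) * (exp (- w) * w ^ x / (w - z) ^ (x + 1))
      - of_nat x * (exp (- w) * w ^ (x - 1) / (w - z) ^ x)"
    using r by (cases x) (simp_all add: wr field_simps)
  have "((\<lambda>w. z * (exp (- w) * w ^ x / (w - z) ^ (x + 1))) has_field_derivative
      - of_nat (x + 1) * (exp (- w) * w ^ (x + 1) / (w - z) ^ (x + 2))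
      + (of_nat (2 * x + 1) - z) * (exp (- w) * w ^ x / (w - z) ^ (x + 1))
      - of_nat x * (exp (- w) * w ^ (x - 1) / (w - z) ^ x)) (at w)"
    using DERIV_cmult[OF deriv, where c = z] by (simp only: recurrence)
  then show ?thesis
    unfolding psi_kernel_def w_def by (rule has_vector_derivative_real_field)
qed

lemma psi_kernel_tendsto_zero:
  assumes z: "z \<notin> complex_of_real ` {0..}"
  shows "(psi_kernel z a b \<longlongrightarrow> 0) at_top"
proof -
  obtain \<delta> where \<delta>: "\<delta> > 0" "\<And>t. t \<ge> 0 \<Longrightarrow> \<delta> \<le> norm (of_real t - z)"
    using half_line_dist_bound[OF z] by blast
  have "eventually (\<lambda>t. norm (psi_kernel z a b t) \<le> 1 / \<delta> ^ b * ((1 + t) ^ a * exp (- t))) at_top"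
    using eventually_ge_at_top[of "0::real"] by eventually_elim (rule norm_psi_kernel_le[OF \<delta>])
  moreover have "((\<lambda>t::real. 1 / \<delta> ^ b * ((1 + t) ^ a * exp (- t))) \<longlongrightarrow> 0) at_top"
    by real_asymp
  ultimately show ?thesis
    by (rule Lim_null_comparison)
qed

lemma L0_psi_integral:
  assumes z: "z \<notin> complex_of_real ` {0..}"
  shows "L0 (psi_integral z) x = chi0 x + z * psi_integral z x"
proof -
  define G where "G t = - of_nat (x + 1) * psi_kernel z (x + 1) (x + 2) t
    + (of_nat (2 * x + 1) - z) * psi_kernel z x (x + 1) t - of_nat x * psi_kernel z (x - 1) x t" for t
  have "(G has_integral - (z * psi_kernel z x (x + 1) 0)) {0..}"
  proof (rule improper_fundamental_theorem_of_calculus)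
    show "G absolutely_integrable_on {0..}"
      unfolding G_def
      by (intro set_integral_diff(1) set_integral_add(1) set_integrable_mult_right
          absolutely_integrable_psi_kernel[OF z])
    show "continuous_on {0..} (\<lambda>t. z * psi_kernel z x (x + 1) t)"
      by (intro continuous_intros continuous_on_psi_kernel[OF z])
    show "((\<lambda>t. z * psi_kernel z x (x + 1) t) \<longlongrightarrow> 0) at_top"
      using tendsto_mult_right_zero[OF psi_kernel_tendsto_zero[OF z]] .
    show "((\<lambda>t. z * psi_kernel z x (x + 1) t) has_vector_derivative G t) (at t)" if "t > 0" for t
      unfolding G_def using that z by (intro psi_kernel_has_vector_derivative) auto
  qed
  moreover have "integral {0..} G = - of_nat (x + 1) * psi_integral z (x + 1)
      + (of_nat (2 * x + 1) - z) * psi_integral z x - of_nat x * psi_integral z (x - 1)"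
    unfolding G_def psi_integral_def
    by (subst integral_linear_combination3) (auto intro: integrable_psi_kernel[OF z] split: nat_diff_split)
  \<comment> \<open>The boundary term at \<open>t = 0\<close> vanishes for \<open>x > 0\<close> and equals \<open>-z / (-z) = 1\<close> for \<open>x = 0\<close>.\<close>
  moreover have "- (z * psi_kernel z x (x + 1) 0) = chi0 x"
    using z by (cases x) (auto simp: psi_kernel_def chi0_def)
  ultimately have "- of_nat (x + 1) * psi_integral z (x + 1) + (of_nat (2 * x + 1) - z) * psi_integral z x
      - of_nat x * psi_integral z (x - 1) = chi0 x"
    by (metis integral_unique)
  then show ?thesis
    by (simp add: L0_eq algebra_simps)
qed

section \<open>Laguerre polynomials\<close>

definition laguerre_coeff :: "nat \<Rightarrow> nat \<Rightarrow> real" where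
  "laguerre_coeff n k = (-1) ^ k * real (n choose k) / fact k"

definition laguerre :: "nat \<Rightarrow> real \<Rightarrow> real" where
  "laguerre n t = (\<Sum>k\<le>n. laguerre_coeff n k * t ^ k)"

lemma binomial_laguerre_recurrence:
  "real (n + 1) * real (Suc n choose k)
    = real (2 * n + 1) * real (n choose k) + (if k = 0 then 0 else real k * real (n choose (k - 1)))
      - real n * real ((n - 1) choose k)"
proof (cases k)
  case (Suc j)
  have Pascal: "real (Suc n choose Suc j) = real (n choose j) + real (n choose Suc j)"
    by simp
  have "(real n - real (Suc j)) * real (n choose Suc j) = real n * real ((n - 1) choose Suc j)"
  proof (cases "Suc j \<le> n")
    case True
    then have "real (n - Suc j) = real n - real (Suc j)"
      by simp
    with binomial_absorb_comp[of n "Suc j"] show ?thesis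
      by (metis of_nat_mult)
  qed (simp add: binomial_eq_0)
  moreover have "real (Suc j) * real (n choose Suc j) = (real n - real j) * real (n choose j)"
  proof (cases "j \<le> n")
    case True
    then have "real (n - j) = real n - real j"
      by simp
    with binomial_absorb_comp[of n j] binomial_absorption[of j n] show ?thesis
      by (metis of_nat_mult)
  qed (simp add: binomial_eq_0)
  ultimately show ?thesis
    using Pascal Suc by (simp add: algebra_simps)
qed simp

lemma laguerre_coeff_recurrence:
  "real (n + 1) * laguerre_coeff (n + 1) k
    = real (2 * n + 1) * laguerre_coeff n k - (if k = 0 then 0 else laguerre_coeff n (k - 1))
      - real n * laguerre_coeff (n - 1) k"
proof (cases k)
  case 0
  then show ?thesis
    using binomial_laguerre_recurrence[of n 0] by (simp add: laguerre_coeff_def)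
next
  case (Suc j)
  have "real (n + 1) * laguerre_coeff (n + 1) k = (-1) ^ k / fact k * (real (n + 1) * real (Suc n choose k))"
    by (simp add: laguerre_coeff_def)
  also have "\<dots> = (-1) ^ k / fact k
      * (real (2 * n + 1) * real (n choose k) + real k * real (n choose j) - real n * real ((n - 1) choose k))"
    using binomial_laguerre_recurrence[of n k] Suc by simp
  also have "(-1) ^ k / fact k * real k * real (n choose j) = - laguerre_coeff n j"
  proof -
    have "fact k = real k * (fact j :: real)" "(-1::real) ^ k = - ((-1) ^ j)" "k \<noteq> 0"
      using Suc by (simp_all add: fact_Suc)
    then show ?thesis
      by (simp add: laguerre_coeff_def)
  qed
  then have "(-1) ^ k / fact k
      * (real (2 * n + 1) * real (n choose k) + real k * real (n choose j) - real n * real ((n - 1) choose k))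
      = real (2 * n + 1) * laguerre_coeff n k - laguerre_coeff n j - real n * laguerre_coeff (n - 1) k"
    by (simp add: laguerre_coeff_def algebra_simps diff_divide_distrib add_divide_distrib)
  finally show ?thesis
    using Suc by simp
qed

lemma laguerre_eq_sum_lessThan:
  "n < N \<Longrightarrow> laguerre n t = (\<Sum>k<N. laguerre_coeff n k * t ^ k)"
  unfolding laguerre_def by (rule sum.mono_neutral_left) (auto simp: laguerre_coeff_def)

lemma laguerre_0 [simp]: "laguerre 0 t = 1"
  by (simp add: laguerre_def laguerre_coeff_def)

lemma mult_laguerre_eq_shifted_sum:
  "t * laguerre n t = (\<Sum>k<n + 2. (if k = 0 then 0 else laguerre_coeff n (k - 1)) * t ^ k)"
proof -
  have "(\<Sum>k<Suc (n + 1). (if k = 0 then 0 else laguerre_coeff n (k - 1)) * t ^ k)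
      = (\<Sum>k<n + 1. laguerre_coeff n k * t ^ Suc k)"
    unfolding sum.lessThan_Suc_shift by simp
  also have "\<dots> = t * laguerre n t"
    unfolding laguerre_def sum_distrib_left by (rule sum.cong) (auto simp: lessThan_Suc_atMost)
  finally show ?thesis
    by simp
qed

lemma laguerre_recurrence:
  "real (n + 1) * laguerre (n + 1) t = (real (2 * n + 1) - t) * laguerre n t - real n * laguerre (n - 1) t"
proof -
  let ?S = "\<lambda>c. \<Sum>k<n + 2. c k * t ^ k"
  have less: "n + 1 < n + 2" "n < n + 2" "n - 1 < n + 2"
    by simp_all
  have "real (n + 1) * laguerre (n + 1) t = ?S (\<lambda>k. real (n + 1) * laguerre_coeff (n + 1) k)"
    by (simp only: laguerre_eq_sum_lessThan[OF less(1)] sum_distrib_left mult.assoc)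
  also have "\<dots> = real (2 * n + 1) * ?S (laguerre_coeff n)
      - ?S (\<lambda>k. if k = 0 then 0 else laguerre_coeff n (k - 1)) - real n * ?S (laguerre_coeff (n - 1))"
    unfolding laguerre_coeff_recurrence
    by (simp only: left_diff_distrib sum_subtractf sum_distrib_left mult.assoc)
  also have "?S (laguerre_coeff n) = laguerre n t"
    by (rule laguerre_eq_sum_lessThan[OF less(2), symmetric])
  also have "?S (laguerre_coeff (n - 1)) = laguerre (n - 1) t"
    by (rule laguerre_eq_sum_lessThan[OF less(3), symmetric])
  also have "?S (\<lambda>k. if k = 0 then 0 else laguerre_coeff n (k - 1)) = t * laguerre n t"
    by (rule mult_laguerre_eq_shifted_sum[symmetric])
  finally show ?thesis
    by (simp add: algebra_simps)
qed

lemma abs_laguerre_le: "t \<ge> 0 \<Longrightarrow> \<bar>laguerre n t\<bar> \<le> (1 + t) ^ n"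
proof -
  assume t: "t \<ge> 0"
  have "\<bar>laguerre n t\<bar> \<le> (\<Sum>k\<le>n. \<bar>laguerre_coeff n k * t ^ k\<bar>)"
    unfolding laguerre_def by (rule sum_abs)
  also have "\<dots> \<le> (\<Sum>k\<le>n. real (n choose k) * t ^ k)"
  proof (rule sum_mono)
    fix k
    show "\<bar>laguerre_coeff n k * t ^ k\<bar> \<le> real (n choose k) * t ^ k"
      using t by (simp add: laguerre_coeff_def abs_mult divide_le_eq mult_le_cancel_left1 fact_ge_1 mult_less_0_iff)
  qed
  also have "\<dots> = (1 + t) ^ n"
    using binomial_ring[of t 1 n] by (simp add: add.commute mult.commute)
  finally show ?thesis .
qed

lemma continuous_on_laguerre: "continuous_on S (laguerre n)"
  unfolding laguerre_def by (intro continuous_intros)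

lemma integrable_laguerre_product:
  "(\<lambda>t. t ^ a * laguerre m t * laguerre n t * exp (- t)) integrable_on {0..}"
proof (rule integrable_if_exp_dominated[where C = 1 and n = "a + m + n"])
  show "continuous_on {0..} (\<lambda>t. t ^ a * laguerre m t * laguerre n t * exp (- t))"
    by (intro continuous_intros continuous_on_laguerre)
  fix t :: real
  assume t: "t \<ge> 0"
  have "norm (t ^ a * laguerre m t * laguerre n t * exp (- t))
      = t ^ a * \<bar>laguerre m t\<bar> * \<bar>laguerre n t\<bar> * exp (- t)"
    using t by (simp add: abs_mult)
  also have "\<dots> \<le> (1 + t) ^ a * (1 + t) ^ m * (1 + t) ^ n * exp (- t)"
    using t by (intro mult_right_mono mult_mono power_mono abs_laguerre_le) auto
  finally show "norm (t ^ a * laguerre m t * laguerre n t * exp (- t)) \<le> 1 * ((1 + t) ^ (a + m + n) * exp (- t))"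
    by (simp add: power_add)
qed

definition laguerre_gram :: "nat \<Rightarrow> nat \<Rightarrow> real" where
  "laguerre_gram m n = integral {0..} (\<lambda>t. laguerre m t * laguerre n t * exp (- t))"

definition laguerre_moment :: "nat \<Rightarrow> nat \<Rightarrow> real" where
  "laguerre_moment m n = integral {0..} (\<lambda>t. t * laguerre m t * laguerre n t * exp (- t))"

lemma integrable_laguerre_gram:
  "(\<lambda>t. laguerre m t * laguerre n t * exp (- t)) integrable_on {0..}"
  using integrable_laguerre_product[of 0 m n] by simp

lemma laguerre_gram_commute: "laguerre_gram m n = laguerre_gram n m"
  unfolding laguerre_gram_def by (simp add: mult_ac)

lemma laguerre_moment_commute: "laguerre_moment m n = laguerre_moment n m"
  unfolding laguerre_moment_def by (simp add: mult_ac)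

lemma laguerre_gram_0: "laguerre_gram 0 n = (if n = 0 then 1 else 0)"
proof -
  have "((\<lambda>t. \<Sum>k\<le>n. laguerre_coeff n k * (t ^ k * exp (- t))) has_integral (\<Sum>k\<le>n. laguerre_coeff n k * fact k)) {0..}"
    by (intro has_integral_sum finite_atMost has_integral_mult_right has_integral_power_mult_exp_neg)
  moreover have "(\<lambda>t. \<Sum>k\<le>n. laguerre_coeff n k * (t ^ k * exp (- t))) = (\<lambda>t. laguerre 0 t * laguerre n t * exp (- t))"
    by (auto simp: laguerre_def[of n] sum_distrib_left mult_ac)
  ultimately have "laguerre_gram 0 n = (\<Sum>k\<le>n. (-1) ^ k * real (n choose k))"
    unfolding laguerre_gram_def by (simp add: integral_unique laguerre_coeff_def)
  also have "\<dots> = (if n = 0 then 1 else 0)"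
    using choose_alternating_sum[of n] by auto
  finally show ?thesis .
qed

lemma laguerre_moment_recurrence:
  "laguerre_moment m n = - real (m + 1) * laguerre_gram (m + 1) n + real (2 * m + 1) * laguerre_gram m n
    - real m * laguerre_gram (m - 1) n"
proof -
  have "laguerre_moment m n = integral {0..} (\<lambda>t. - real (m + 1) * (laguerre (m + 1) t * laguerre n t * exp (- t))
      + real (2 * m + 1) * (laguerre m t * laguerre n t * exp (- t)) - real m * (laguerre (m - 1) t * laguerre n t * exp (- t)))"
    unfolding laguerre_moment_def
  proof (rule integral_cong)
    fix t :: real
    have recurrence: "t * laguerre m t = - real (m + 1) * laguerre (m + 1) t + real (2 * m + 1) * laguerre m t
        - real m * laguerre (m - 1) t"
      using laguerre_recurrence[of m t] by (simp add: algebra_simps)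
    show "t * laguerre m t * laguerre n t * exp (- t) = - real (m + 1) * (laguerre (m + 1) t * laguerre n t * exp (- t))
        + real (2 * m + 1) * (laguerre m t * laguerre n t * exp (- t)) - real m * (laguerre (m - 1) t * laguerre n t * exp (- t))"
      unfolding recurrence by (simp add: algebra_simps)
  qed
  also have "\<dots> = - real (m + 1) * laguerre_gram (m + 1) n + real (2 * m + 1) * laguerre_gram m n - real m * laguerre_gram (m - 1) n"
    unfolding laguerre_gram_def by (rule integral_linear_combination3) (rule integrable_laguerre_gram)+
  finally show ?thesis .
qed

text \<open>Orthonormality by induction on \<open>m\<close>: expanding the symmetric moment \<open>\<integral> t L\<^sub>m L\<^sub>n e\<^sup>-\<^sup>t\<close>
  by the three-term recurrence once in \<open>m\<close> and once in \<open>n\<close> determines \<open>\<langle>L\<^sub>m\<^sub>+\<^sub>1, L\<^sub>n\<rangle>\<close>.\<close>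

lemma laguerre_orthonormal: "laguerre_gram m n = (if m = n then 1 else 0)"
proof (induction m arbitrary: n rule: less_induct)
  case (less m)
  show ?case
  proof (cases m)
    case 0
    then show ?thesis
      by (simp add: laguerre_gram_0)
  next
    case (Suc p)
    have IH: "laguerre_gram p k = (if p = k then 1 else 0)" "laguerre_gram (p - 1) k = (if p - 1 = k then 1 else 0)" for k
      using less Suc by simp_all
    have "laguerre_moment p n = laguerre_moment n p"
      by (rule laguerre_moment_commute)
    also have "\<dots> = - real (n + 1) * laguerre_gram p (n + 1) + real (2 * n + 1) * laguerre_gram p n
        - real n * laguerre_gram p (n - 1)"
      by (simp add: laguerre_moment_recurrence laguerre_gram_commute[of _ p])
    finally have "laguerre_moment p n = - real (n + 1) * laguerre_gram p (n + 1) + real (2 * n + 1) * laguerre_gram p n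
        - real n * laguerre_gram p (n - 1)" .
    moreover have "laguerre_moment p n = - real (p + 1) * laguerre_gram (p + 1) n + real (2 * p + 1) * laguerre_gram p n
        - real p * laguerre_gram (p - 1) n"
      by (rule laguerre_moment_recurrence)
    ultimately have "real (p + 1) * laguerre_gram (p + 1) n = real (p + 1) * (if p + 1 = n then 1 else 0)"
      unfolding IH by (auto split: if_splits)
    then show ?thesis
      using Suc by (simp del: of_nat_Suc)
  qed
qed

lemma integrable_laguerre_mult_bounded:
  fixes h :: "real \<Rightarrow> real"
  assumes cont: "continuous_on {0..} h" and bounded: "\<And>t. t \<ge> 0 \<Longrightarrow> \<bar>h t\<bar> \<le> K"
  shows "(\<lambda>t. laguerre x t * exp (- t) * h t) integrable_on {0..}"
proof (rule integrable_if_exp_dominated[where C = K and n = x])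
  show "continuous_on {0..} (\<lambda>t. laguerre x t * exp (- t) * h t)"
    by (intro continuous_intros continuous_on_laguerre cont)
  fix t :: real
  assume t: "t \<ge> 0"
  have "norm (laguerre x t * exp (- t) * h t) = \<bar>laguerre x t\<bar> * exp (- t) * \<bar>h t\<bar>"
    by (simp add: abs_mult)
  also have "\<dots> \<le> (1 + t) ^ x * exp (- t) * K"
    using t bounded[of 0] by (intro mult_mono abs_laguerre_le bounded) auto
  finally show "norm (laguerre x t * exp (- t) * h t) \<le> K * ((1 + t) ^ x * exp (- t))"
    by (simp add: mult_ac)
qed

lemma laguerre_bessel_inequality:
  fixes h :: "real \<Rightarrow> real"
  assumes cont: "continuous_on {0..} h" and bounded: "\<And>t. t \<ge> 0 \<Longrightarrow> \<bar>h t\<bar> \<le> K"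
  shows "(\<Sum>x<N. (integral {0..} (\<lambda>t. laguerre x t * exp (- t) * h t))\<^sup>2) \<le> integral {0..} (\<lambda>t. (h t)\<^sup>2 * exp (- t))"
proof -
  define a where "a x = integral {0..} (\<lambda>t. laguerre x t * exp (- t) * h t)" for x
  define S where "S t = (\<Sum>x<N. a x * laguerre x t)" for t
  have coeff_integrable: "(\<lambda>t. laguerre x t * exp (- t) * h t) integrable_on {0..}" for x
    by (rule integrable_laguerre_mult_bounded[OF cont bounded])
  have "\<bar>(h t)\<^sup>2\<bar> \<le> K\<^sup>2" if "t \<ge> 0" for t
    using power_mono[OF bounded[OF that] abs_ge_zero, of 2] by simp
  from integrable_laguerre_mult_bounded[OF continuous_on_power[OF cont] this, of 0]
  have square_integrable: "(\<lambda>t. (h t)\<^sup>2 * exp (- t)) integrable_on {0..}"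
    by (simp add: mult.commute)
  \<comment> \<open>Expand \<open>\<integral> (h - S)\<^sup>2 e\<^sup>-\<^sup>t \<ge> 0\<close> using orthonormality.\<close>
  have "((\<lambda>t. (h t)\<^sup>2 * exp (- t) - 2 * (\<Sum>x<N. a x * (laguerre x t * exp (- t) * h t))
        + (\<Sum>x<N. \<Sum>y<N. a x * a y * (laguerre x t * laguerre y t * exp (- t))))
      has_integral (integral {0..} (\<lambda>t. (h t)\<^sup>2 * exp (- t)) - 2 * (\<Sum>x<N. a x * a x)
        + (\<Sum>x<N. \<Sum>y<N. a x * a y * laguerre_gram x y))) {0..}"
    unfolding a_def laguerre_gram_def
    by (intro has_integral_add has_integral_diff has_integral_mult_right has_integral_sum finite_lessThan
        integrable_integral square_integrable coeff_integrable integrable_laguerre_gram)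
  moreover have "(h t)\<^sup>2 * exp (- t) - 2 * (\<Sum>x<N. a x * (laguerre x t * exp (- t) * h t))
      + (\<Sum>x<N. \<Sum>y<N. a x * a y * (laguerre x t * laguerre y t * exp (- t)))
      = (h t - S t)\<^sup>2 * exp (- t)" for t
  proof -
    have "(S t)\<^sup>2 * exp (- t) = (\<Sum>x<N. \<Sum>y<N. (a x * laguerre x t) * (a y * laguerre y t)) * exp (- t)"
      unfolding S_def power2_eq_square sum_product ..
    also have "\<dots> = (\<Sum>x<N. \<Sum>y<N. (a x * laguerre x t) * (a y * laguerre y t) * exp (- t))"
      by (simp add: sum_distrib_right)
    finally have "(\<Sum>x<N. \<Sum>y<N. a x * a y * (laguerre x t * laguerre y t * exp (- t))) = (S t)\<^sup>2 * exp (- t)"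
      by (simp add: mult_ac)
    moreover have "(\<Sum>x<N. a x * (laguerre x t * exp (- t) * h t)) = S t * h t * exp (- t)"
      unfolding S_def sum_distrib_right by (simp add: mult_ac)
    ultimately show ?thesis
      by (simp add: power2_eq_square algebra_simps)
  qed
  moreover have "(\<Sum>x<N. \<Sum>y<N. a x * a y * laguerre_gram x y) = (\<Sum>x<N. a x * a x)"
    by (simp add: laguerre_orthonormal if_distrib cong: if_cong)
  ultimately have "((\<lambda>t. (h t - S t)\<^sup>2 * exp (- t)) has_integral
      integral {0..} (\<lambda>t. (h t)\<^sup>2 * exp (- t)) - (\<Sum>x<N. a x * a x)) {0..}"
    by simp
  then have "0 \<le> integral {0..} (\<lambda>t. (h t)\<^sup>2 * exp (- t)) - (\<Sum>x<N. a x * a x)"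
    by (rule has_integral_nonneg) simp
  then show ?thesis
    by (simp add: a_def power2_eq_square)
qed

section \<open>The Laguerre coefficients of the resolvent kernel\<close>

definition laguerre_transform :: "complex \<Rightarrow> nat \<Rightarrow> complex" where
  "laguerre_transform z x = integral {0..} (\<lambda>t. of_real (laguerre x t * exp (- t)) / (of_real t - z))"

lemma integrable_laguerre_transform:
  assumes z: "z \<notin> complex_of_real ` {0..}"
  shows "(\<lambda>t. of_real (laguerre x t * exp (- t)) / (of_real t - z)) integrable_on {0..}"
proof -
  obtain \<delta> where \<delta>: "\<delta> > 0" "\<And>t. t \<ge> 0 \<Longrightarrow> \<delta> \<le> norm (of_real t - z)"
    using half_line_dist_bound[OF z] by blast
  show ?thesis
  proof (rule integrable_if_exp_dominated[where C = "1 / \<delta>" and n = x])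
    show "continuous_on {0..} (\<lambda>t. of_real (laguerre x t * exp (- t)) / (of_real t - z))"
      using z by (intro continuous_intros continuous_on_laguerre) auto
    fix t :: real
    assume t: "t \<ge> 0"
    have "norm (of_real (laguerre x t * exp (- t)) / (of_real t - z)) = \<bar>laguerre x t\<bar> * exp (- t) / norm (of_real t - z)"
      by (simp add: norm_divide norm_mult abs_mult)
    also have "\<dots> \<le> (1 + t) ^ x * exp (- t) / \<delta>"
      using t \<delta> by (intro frac_le mult_right_mono abs_laguerre_le) auto
    finally show "norm (of_real (laguerre x t * exp (- t)) / (of_real t - z)) \<le> 1 / \<delta> * ((1 + t) ^ x * exp (- t))"
      by simp
  qed
qed

lemma laguerre_resolvent_recurrence:
  assumes "complex_of_real t \<noteq> z"
  shows "- of_nat (x + 1) * (of_real (laguerre (x + 1) t * exp (- t)) / (of_real t - z))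
      + (of_nat (2 * x + 1) - z) * (of_real (laguerre x t * exp (- t)) / (of_real t - z))
      - of_nat x * (of_real (laguerre (x - 1) t * exp (- t)) / (of_real t - z))
    = of_real (laguerre x t * exp (- t))"
proof -
  have "- real (x + 1) * laguerre (x + 1) t + real (2 * x + 1) * laguerre x t
      - real x * laguerre (x - 1) t = t * laguerre x t"
    using laguerre_recurrence[of x t] by (simp add: algebra_simps)
  then have "complex_of_real (- real (x + 1) * laguerre (x + 1) t + real (2 * x + 1) * laguerre x t
      - real x * laguerre (x - 1) t) = complex_of_real (t * laguerre x t)"
    by (rule arg_cong)
  then have "- of_nat (x + 1) * of_real (laguerre (x + 1) t) + of_nat (2 * x + 1) * of_real (laguerre x t)
      - of_nat x * of_real (laguerre (x - 1) t) = of_real t * (of_real (laguerre x t) :: complex)"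
    by (simp only: of_real_add of_real_diff of_real_mult of_real_minus of_real_of_nat_eq)
  then have recurrence: "- of_nat (x + 1) * of_real (laguerre (x + 1) t) + (of_nat (2 * x + 1) - z) * of_real (laguerre x t)
      - of_nat x * of_real (laguerre (x - 1) t) = (of_real t - z) * (of_real (laguerre x t) :: complex)"
    by (simp add: algebra_simps)
  have "- of_nat (x + 1) * (of_real (laguerre (x + 1) t * exp (- t)) / (of_real t - z))
      + (of_nat (2 * x + 1) - z) * (of_real (laguerre x t * exp (- t)) / (of_real t - z))
      - of_nat x * (of_real (laguerre (x - 1) t * exp (- t)) / (of_real t - z))
    = (- of_nat (x + 1) * of_real (laguerre (x + 1) t) + (of_nat (2 * x + 1) - z) * of_real (laguerre x t)
      - of_nat x * of_real (laguerre (x - 1) t)) * of_real (exp (- t)) * inverse (of_real t - z)"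
    by (simp add: divide_inverse algebra_simps)
  also have "\<dots> = of_real (laguerre x t * exp (- t))"
    unfolding recurrence using assms by simp
finally show ?thesis .
qed

lemma L0_laguerre_transform:
  assumes z: "z \<notin> complex_of_real ` {0..}"
  shows "L0 (laguerre_transform z) x = chi0 x + z * laguerre_transform z x"
proof -
  have "- of_nat (x + 1) * laguerre_transform z (x + 1) + (of_nat (2 * x + 1) - z) * laguerre_transform z x
      - of_nat x * laguerre_transform z (x - 1)
    = integral {0..} (\<lambda>t. - of_nat (x + 1) * (of_real (laguerre (x + 1) t * exp (- t)) / (of_real t - z))
      + (of_nat (2 * x + 1) - z) * (of_real (laguerre x t * exp (- t)) / (of_real t - z))
      - of_nat x * (of_real (laguerre (x - 1) t * exp (- t)) / (of_real t - z)))"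
    unfolding laguerre_transform_def
    by (rule integral_linear_combination3[symmetric]) (rule integrable_laguerre_transform[OF z])+
  also have "\<dots> = integral {0..} (\<lambda>t. of_real (laguerre 0 t * laguerre x t * exp (- t)))"
    by (rule integral_cong, subst laguerre_resolvent_recurrence) (use z in auto)
  also have "\<dots> = of_real (laguerre_gram 0 x)"
    unfolding laguerre_gram_def
    by (rule integral_unique, rule has_integral_of_real, rule integrable_integral, rule integrable_laguerre_gram)
  also have "\<dots> = chi0 x"
    by (simp add: laguerre_gram_0 chi0_def)
  finally show ?thesis
    by (simp add: L0_eq algebra_simps)
qed

lemma psi_integral_eq_laguerre_transform:
  assumes z: "z \<notin> complex_of_real ` {0..}"
  shows "psi_integral z = laguerre_transform z"
proof (rule L0_solution_unique[where z = z])
  show "psi_integral z 0 = laguerre_transform z 0"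
    unfolding psi_integral_def laguerre_transform_def
    by (rule integral_cong) (simp add: psi_kernel_def flip: exp_of_real)
qed (simp add: L0_psi_integral[OF z] L0_laguerre_transform[OF z])

text \<open>The map \<open>h \<mapsto> (\<integral> L\<^sub>x h e\<^sup>-\<^sup>t)\<^sub>x\<close> is a contraction from \<open>L\<^sup>2(e\<^sup>-\<^sup>t dt)\<close> to \<open>\<ell>\<^sup>2\<close>;
  apply it to the real and imaginary parts of the bounded function \<open>1 / (t - z)\<close>.\<close>

lemma in_l2_laguerre_transform:
  assumes z: "z \<notin> complex_of_real ` {0..}"
  shows "in_l2 (laguerre_transform z)"
  unfolding in_l2_def
proof (rule summableI_nonneg_bounded)
  obtain \<delta> where \<delta>: "\<delta> > 0" "\<And>t. t \<ge> 0 \<Longrightarrow> \<delta> \<le> norm (of_real t - z)"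
    using half_line_dist_bound[OF z] by blast
  define h where "h t = inverse (complex_of_real t - z)" for t
  have norm_h: "norm (h t) \<le> 1 / \<delta>" if "t \<ge> 0" for t
    using le_imp_inverse_le[OF \<delta>(2)[OF that] \<delta>(1)] by (simp add: h_def norm_inverse divide_inverse)
  have cont_h: "continuous_on {0..} h"
    unfolding h_def using z by (intro continuous_intros) auto
  have integrable: "(\<lambda>t. of_real (laguerre x t * exp (- t)) * h t) integrable_on {0..}" for x
    using integrable_laguerre_transform[OF z, of x] by (simp add: h_def divide_inverse)
  have Re: "Re (laguerre_transform z x) = integral {0..} (\<lambda>t. laguerre x t * exp (- t) * Re (h t))"
    and Im: "Im (laguerre_transform z x) = integral {0..} (\<lambda>t. laguerre x t * exp (- t) * Im (h t))" for x
    using integral_unique[OF has_integral_Re[OF integrable_integral[OF integrable[of x]]]]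
      integral_unique[OF has_integral_Im[OF integrable_integral[OF integrable[of x]]]]
    by (simp_all add: laguerre_transform_def h_def divide_inverse)
  fix N
  have "(\<Sum>x<N. (norm (laguerre_transform z x))\<^sup>2)
      = (\<Sum>x<N. (Re (laguerre_transform z x))\<^sup>2) + (\<Sum>x<N. (Im (laguerre_transform z x))\<^sup>2)"
    by (simp add: cmod_power2 sum.distrib)
  also have "\<dots> \<le> integral {0..} (\<lambda>t. (Re (h t))\<^sup>2 * exp (- t)) + integral {0..} (\<lambda>t. (Im (h t))\<^sup>2 * exp (- t))"
    unfolding Re Im
    by (intro add_mono laguerre_bessel_inequality[where K = "1 / \<delta>"] continuous_intros cont_h
        order_trans[OF abs_Re_le_cmod norm_h] order_trans[OF abs_Im_le_cmod norm_h])
  finally show "(\<Sum>x<N. (norm (laguerre_transform z x))\<^sup>2)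
      \<le> integral {0..} (\<lambda>t. (Re (h t))\<^sup>2 * exp (- t)) + integral {0..} (\<lambda>t. (Im (h t))\<^sup>2 * exp (- t))" .
qed simp

section \<open>Square-summable sequences\<close>

lemma norm_add_squared_le:
  fixes a b :: "'a::real_normed_vector"
  shows "(norm (a + b))\<^sup>2 \<le> 2 * (norm a)\<^sup>2 + 2 * (norm b)\<^sup>2"
proof -
  have "(norm (a + b))\<^sup>2 \<le> (norm a + norm b)\<^sup>2"
    by (intro power_mono norm_triangle_ineq) auto
  also have "\<dots> \<le> 2 * (norm a)\<^sup>2 + 2 * (norm b)\<^sup>2"
    using sum_squares_ge_zero[of "norm a - norm b" 0] by (simp add: power2_eq_square algebra_simps)
  finally show ?thesis .
qed

lemma norm_diff_squared_le:
  fixes a b :: "'a::real_normed_vector"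
  shows "(norm (a - b))\<^sup>2 \<le> 2 * (norm a)\<^sup>2 + 2 * (norm b)\<^sup>2"
  using norm_add_squared_le[of a "- b"] by simp

lemma in_l2_norm_le: "in_l2 f \<Longrightarrow> (\<And>x. norm (g x) \<le> norm (f x)) \<Longrightarrow> in_l2 g"
  unfolding in_l2_def by (rule summable_comparison_test'[where N = 0]) (auto intro: power_mono)

lemma in_l2_add: "in_l2 a \<Longrightarrow> in_l2 b \<Longrightarrow> in_l2 (\<lambda>x. a x + b x)"
  unfolding in_l2_def
  by (rule summable_comparison_test'[where N = 0 and g = "\<lambda>x. 2 * (norm (a x))\<^sup>2 + 2 * (norm (b x))\<^sup>2"])
     (auto intro: summable_add summable_mult norm_add_squared_le)

lemma in_l2_diff: "in_l2 a \<Longrightarrow> in_l2 b \<Longrightarrow> in_l2 (\<lambda>x. a x - b x)"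
  unfolding in_l2_def
  by (rule summable_comparison_test'[where N = 0 and g = "\<lambda>x. 2 * (norm (a x))\<^sup>2 + 2 * (norm (b x))\<^sup>2"])
     (auto intro: summable_add summable_mult norm_diff_squared_le)

lemma in_l2_mult_left: "in_l2 a \<Longrightarrow> in_l2 (\<lambda>x. c * a x)"
  unfolding in_l2_def by (simp add: norm_mult power_mult_distrib summable_mult)

lemma in_l2_shift: "in_l2 a \<Longrightarrow> in_l2 (\<lambda>x. a (x + 1))"
  unfolding in_l2_def using summable_Suc_iff[of "\<lambda>x. (norm (a x))\<^sup>2"] by simp

lemma in_l2_shift_back: "in_l2 a \<Longrightarrow> in_l2 (\<lambda>x. a (x - 1))"
  unfolding in_l2_def using summable_Suc_iff[of "\<lambda>x. (norm (a (x - 1)))\<^sup>2"] by simp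

lemma in_l2_finite_support: "(\<And>x. N < x \<Longrightarrow> a x = 0) \<Longrightarrow> in_l2 a"
  unfolding in_l2_def by (rule summable_finite[of "{..N}"]) (auto simp: not_le)

lemma in_l2_tendsto_zero:
  assumes "in_l2 a"
  shows "a \<longlonglongrightarrow> 0"
proof -
  have "(\<lambda>n. (norm (a n))\<^sup>2) \<longlonglongrightarrow> 0"
    using assms unfolding in_l2_def by (rule summable_LIMSEQ_zero)
  then have "(\<lambda>n. norm (a n)) \<longlonglongrightarrow> 0"
    using tendsto_real_sqrt by fastforce
  then show ?thesis
    by (rule tendsto_norm_zero_cancel)
qed

lemma l2_norm2_nonneg: "in_l2 a \<Longrightarrow> 0 \<le> l2_norm2 a"
  unfolding in_l2_def l2_norm2_def by (rule suminf_nonneg) auto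

lemma l2_norm2_eq_0_iff: "in_l2 a \<Longrightarrow> l2_norm2 a = 0 \<longleftrightarrow> a = (\<lambda>_. 0)"
  unfolding in_l2_def l2_norm2_def by (subst suminf_eq_zero_iff) (auto simp: fun_eq_iff)

lemma l2_norm2_diff_le:
  assumes a: "in_l2 a" and b: "in_l2 b"
  shows "l2_norm2 (\<lambda>x. a x - b x) \<le> 2 * l2_norm2 a + 2 * l2_norm2 b"
proof -
  have "l2_norm2 (\<lambda>x. a x - b x) \<le> (\<Sum>x. 2 * (norm (a x))\<^sup>2 + 2 * (norm (b x))\<^sup>2)"
    unfolding l2_norm2_def using in_l2_diff[OF a b] a b
    by (intro suminf_le norm_diff_squared_le) (auto simp: in_l2_def intro: summable_add summable_mult)
  also have "\<dots> = 2 * l2_norm2 a + 2 * l2_norm2 b"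
    using a b unfolding in_l2_def l2_norm2_def by (simp add: suminf_add[symmetric] suminf_mult summable_mult)
  finally show ?thesis .
qed

lemma tendsto_l2_norm2_diff:
  assumes "\<And>n. in_l2 (a n)" "\<And>n. in_l2 (b n)"
    and "(\<lambda>n. l2_norm2 (a n)) \<longlonglongrightarrow> 0" "(\<lambda>n. l2_norm2 (b n)) \<longlonglongrightarrow> 0"
  shows "(\<lambda>n. l2_norm2 (\<lambda>x. a n x - b n x)) \<longlonglongrightarrow> 0"
proof (rule real_tendsto_sandwich[where f = "\<lambda>_. 0" and h = "\<lambda>n. 2 * l2_norm2 (a n) + 2 * l2_norm2 (b n)"])
  show "\<forall>\<^sub>F n in sequentially. 0 \<le> l2_norm2 (\<lambda>x. a n x - b n x)"
    by (intro always_eventually allI l2_norm2_nonneg in_l2_diff assms)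
  show "\<forall>\<^sub>F n in sequentially. l2_norm2 (\<lambda>x. a n x - b n x) \<le> 2 * l2_norm2 (a n) + 2 * l2_norm2 (b n)"
    by (intro always_eventually allI l2_norm2_diff_le assms)
  show "(\<lambda>n. 2 * l2_norm2 (a n) + 2 * l2_norm2 (b n)) \<longlonglongrightarrow> 0"
    using tendsto_add[OF tendsto_mult_left[OF assms(3)] tendsto_mult_left[OF assms(4)], of 2 2] by simp
qed simp

lemma l2_norm2_tendsto_zero_if_tail_dominated:
  fixes a :: "nat \<Rightarrow> nat \<Rightarrow> complex"
  assumes H: "summable H" and dominated: "\<And>n x. (norm (a n x))\<^sup>2 \<le> (if n \<le> x then H x else 0)"
  shows "(\<lambda>n. l2_norm2 (a n)) \<longlonglongrightarrow> 0"
proof -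
  define T where "T n = (\<lambda>x. if x < n then H x else 0)" for n
  have T_summable: "summable (T n)" for n
    by (rule summable_finite[of "{..<n}"]) (auto simp: T_def)
  have T_sum: "suminf (T n) = (\<Sum>x<n. H x)" for n
    by (subst suminf_finite[of "{..<n}"]) (auto simp: T_def)
  have tail: "(if n \<le> x then H x else 0) = H x - T n x" for n x
    by (simp add: T_def)
  have bound: "norm ((norm (a n x))\<^sup>2) \<le> H x - T n x" for n x
    using dominated[of n x] by (simp add: tail)
  have summable_H: "summable (\<lambda>x. H x - T n x)" for n
    using H T_summable by (rule summable_diff)
  have summable_a: "summable (\<lambda>x. (norm (a n x))\<^sup>2)" for n
    by (rule summable_comparison_test'[OF summable_H, where N = 0]) (use bound in auto)
  have upper: "l2_norm2 (a n) \<le> suminf H - (\<Sum>x<n. H x)" for n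
  proof -
    have "l2_norm2 (a n) \<le> (\<Sum>x. H x - T n x)"
      unfolding l2_norm2_def by (rule suminf_le[OF _ summable_a summable_H]) (use bound in auto)
    then show ?thesis
      using suminf_diff[OF H T_summable[of n]] T_sum[of n] by simp
  qed
  have lower: "0 \<le> l2_norm2 (a n)" for n
    unfolding l2_norm2_def using summable_a by (rule suminf_nonneg) simp
  show ?thesis
  proof (rule real_tendsto_sandwich[where f = "\<lambda>_. 0" and h = "\<lambda>n. suminf H - (\<Sum>x<n. H x)"])
    show "\<forall>\<^sub>F n in sequentially. 0 \<le> l2_norm2 (a n)"
      using lower by simp
    show "\<forall>\<^sub>F n in sequentially. l2_norm2 (a n) \<le> suminf H - (\<Sum>x<n. H x)"
      using upper by simp
    show "(\<lambda>n. suminf H - (\<Sum>x<n. H x)) \<longlonglongrightarrow> 0"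
      using tendsto_diff[OF tendsto_const summable_LIMSEQ[OF H], of "suminf H"] by simp
  qed simp
qed

definition l2_inner :: "(nat \<Rightarrow> complex) \<Rightarrow> (nat \<Rightarrow> complex) \<Rightarrow> complex" where
  "l2_inner a b = (\<Sum>x. cnj (a x) * b x)"

lemma summable_norm_l2_inner:
  assumes "in_l2 a" "in_l2 b"
  shows "summable (\<lambda>x. norm (cnj (a x) * b x))"
proof (rule summable_comparison_test'[where N = 0])
  show "summable (\<lambda>x. (norm (a x))\<^sup>2 + (norm (b x))\<^sup>2)"
    using assms unfolding in_l2_def by (rule summable_add)
  fix x :: nat
  have "norm (a x) * norm (b x) \<le> (norm (a x))\<^sup>2 + (norm (b x))\<^sup>2"
    using sum_squares_ge_zero[of "norm (a x) - norm (b x)" 0]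
    by (simp add: power2_eq_square algebra_simps) (smt (verit) mult_nonneg_nonneg norm_ge_zero)
  then show "norm (norm (cnj (a x) * b x)) \<le> (norm (a x))\<^sup>2 + (norm (b x))\<^sup>2"
    by (simp add: norm_mult)
qed

lemma summable_l2_inner: "in_l2 a \<Longrightarrow> in_l2 b \<Longrightarrow> summable (\<lambda>x. cnj (a x) * b x)"
  by (rule summable_norm_cancel[OF summable_norm_l2_inner])

lemma norm_l2_inner_le:
  assumes "in_l2 a" "in_l2 b"
  shows "norm (l2_inner a b) \<le> sqrt (l2_norm2 a * l2_norm2 b)"
proof -
  have summable: "summable (\<lambda>x. norm (cnj (a x) * b x))"
    by (rule summable_norm_l2_inner[OF assms])
  have "norm (l2_inner a b) \<le> (\<Sum>x. norm (cnj (a x) * b x))"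
    unfolding l2_inner_def by (rule summable_norm[OF summable])
  also have "\<dots> \<le> sqrt (l2_norm2 a * l2_norm2 b)"
  proof (rule suminf_le_const[OF summable])
    fix N
    have "(\<Sum>x<N. norm (cnj (a x) * b x))\<^sup>2 = (\<Sum>x<N. norm (a x) * norm (b x))\<^sup>2"
      by (simp add: norm_mult)
    also have "\<dots> \<le> (\<Sum>x<N. (norm (a x))\<^sup>2) * (\<Sum>x<N. (norm (b x))\<^sup>2)"
      by (rule Cauchy_Schwarz_ineq_sum)
    also have "\<dots> \<le> l2_norm2 a * l2_norm2 b"
      using assms unfolding in_l2_def l2_norm2_def
      by (intro mult_mono sum_le_suminf) (auto intro: sum_nonneg suminf_nonneg)
    finally show "(\<Sum>x<N. norm (cnj (a x) * b x)) \<le> sqrt (l2_norm2 a * l2_norm2 b)"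
      by (simp add: real_le_rsqrt sum_nonneg)
  qed
  finally show ?thesis .
qed

lemma l2_inner_mult_right_self:
  assumes "in_l2 a"
  shows "l2_inner a (\<lambda>x. c * a x) = c * of_real (l2_norm2 a)"
proof -
  have summable: "summable (\<lambda>x. (norm (a x))\<^sup>2)"
    using assms by (simp add: in_l2_def)
  have "l2_inner a (\<lambda>x. c * a x) = (\<Sum>x. c * complex_of_real ((norm (a x))\<^sup>2))"
    unfolding l2_inner_def by (rule suminf_cong) (simp only: complex_norm_square, simp add: mult_ac)
  also have "\<dots> = c * of_real (l2_norm2 a)"
    unfolding l2_norm2_def suminf_of_real[OF summable] by (rule suminf_mult[OF summable_of_real[OF summable]])
  finally show ?thesis .
qed

lemma tendsto_l2_inner:
  assumes a: "\<And>n. in_l2 (a n)" "in_l2 A" and b: "\<And>n. in_l2 (b n)" "in_l2 B"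
    and lim_a: "(\<lambda>n. l2_norm2 (\<lambda>x. a n x - A x)) \<longlonglongrightarrow> 0"
    and lim_b: "(\<lambda>n. l2_norm2 (\<lambda>x. b n x - B x)) \<longlonglongrightarrow> 0"
  shows "(\<lambda>n. l2_inner (a n) (b n)) \<longlonglongrightarrow> l2_inner A B"
proof -
  define da where "da n = (\<lambda>x. a n x - A x)" for n
  define db where "db n = (\<lambda>x. b n x - B x)" for n
  have da: "in_l2 (da n)" and db: "in_l2 (db n)" for n
    unfolding da_def db_def by (intro in_l2_diff a b)+
  have split: "l2_inner (a n) (b n) - l2_inner A B = l2_inner (da n) (db n) + l2_inner A (db n) + l2_inner (da n) B"
    for n
  proof -
    have "l2_inner (a n) (b n) - l2_inner A B = (\<Sum>x. cnj (a n x) * b n x - cnj (A x) * B x)"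
      unfolding l2_inner_def by (intro suminf_diff summable_l2_inner a b)
    also have "\<dots> = (\<Sum>x. cnj (da n x) * db n x + cnj (A x) * db n x + cnj (da n x) * B x)"
      by (simp add: da_def db_def algebra_simps)
    also have "\<dots> = l2_inner (da n) (db n) + l2_inner A (db n) + l2_inner (da n) B"
      unfolding l2_inner_def
      by (subst suminf_add[symmetric], (intro summable_add summable_l2_inner da db a b)+)+ simp
    finally show ?thesis .
  qed
  define bound where "bound n = sqrt (l2_norm2 (da n) * l2_norm2 (db n)) + sqrt (l2_norm2 A * l2_norm2 (db n))
    + sqrt (l2_norm2 (da n) * l2_norm2 B)" for n
  have "\<forall>n. norm (l2_inner (a n) (b n) - l2_inner A B) \<le> bound n"
  proof
    fix n
    have "norm (l2_inner (a n) (b n) - l2_inner A B)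
        \<le> norm (l2_inner (da n) (db n)) + norm (l2_inner A (db n)) + norm (l2_inner (da n) B)"
      unfolding split by (rule order_trans[OF norm_triangle_ineq add_right_mono[OF norm_triangle_ineq]])
    also have "\<dots> \<le> bound n"
      unfolding bound_def by (intro add_mono norm_l2_inner_le da db a b)
    finally show "norm (l2_inner (a n) (b n) - l2_inner A B) \<le> bound n" .
  qed
  moreover have "bound \<longlonglongrightarrow> 0"
    unfolding bound_def da_def db_def
    using tendsto_add[OF tendsto_add[OF tendsto_real_sqrt[OF tendsto_mult[OF lim_a lim_b]]
        tendsto_real_sqrt[OF tendsto_mult[OF tendsto_const lim_b]]]
        tendsto_real_sqrt[OF tendsto_mult[OF lim_a tendsto_const]]]
    by simp
  ultimately have "(\<lambda>n. l2_inner (a n) (b n) - l2_inner A B) \<longlonglongrightarrow> 0"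
    by (rule Lim_null_comparison[OF always_eventually])
  then show ?thesis
    by (simp add: LIM_zero_iff)
qed

section \<open>The operator \<open>L0\<close> and its closure\<close>

lemma L0_dom_iff: "v \<in> L0_dom \<longleftrightarrow> in_l2 v \<and> in_l2 (\<lambda>x. of_nat x * v x)"
  by (simp add: L0_dom_def in_l2_def norm_mult power_mult_distrib)

lemma L0_dom_diff: "u \<in> L0_dom \<Longrightarrow> v \<in> L0_dom \<Longrightarrow> (\<lambda>x. u x - v x) \<in> L0_dom"
  unfolding L0_dom_iff right_diff_distrib by (auto intro: in_l2_diff)

lemma in_l2_L0:
  assumes "u \<in> L0_dom"
  shows "in_l2 (L0 u)"
proof -
  define w where "w x = of_nat x * u x" for x
  have u: "in_l2 u" and w: "in_l2 w"
    using assms unfolding w_def by (simp_all add: L0_dom_iff)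
  have "norm (of_nat x * u (x - 1)) \<le> norm (w (x - 1) + u (x - 1))" for x
    by (cases x) (simp_all add: w_def algebra_simps)
  then have "in_l2 (\<lambda>x. of_nat x * u (x - 1))"
    by (rule in_l2_norm_le[OF in_l2_shift_back[OF in_l2_add[OF w u]]])
  moreover have "L0 u = (\<lambda>x. (2 * w x + u x) - w (x + 1) - of_nat x * u (x - 1))"
    by (auto simp: fun_eq_iff L0_eq w_def algebra_simps)
  ultimately show ?thesis
    using u w in_l2_shift[OF w] by (auto intro!: in_l2_diff in_l2_add in_l2_mult_left)
qed

text \<open>Summation by parts: \<open>L0 v x = (x + 1) (v x - v (x + 1)) - x (v (x - 1) - v x)\<close>.\<close>

lemma sum_cnj_mult_L0:
  "(\<Sum>x<Suc N. cnj (u x) * L0 u x) = of_real (\<Sum>y<N. real (y + 1) * (norm (u y - u (y + 1)))\<^sup>2)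
    + of_nat (N + 1) * cnj (u N) * (u N - u (N + 1))"
proof (induction N)
  case 0
  then show ?case
    by (simp add: L0_def algebra_simps)
next
  case (Suc N)
  have square: "complex_of_real ((norm (u N - u (Suc N)))\<^sup>2) = (u N - u (Suc N)) * (cnj (u N) - cnj (u (Suc N)))"
    using complex_norm_square[of "u N - u (Suc N)"] by simp
  have "(\<Sum>x<Suc (Suc N). cnj (u x) * L0 u x)
      = of_real (\<Sum>y<N. real (y + 1) * (norm (u y - u (y + 1)))\<^sup>2)
        + of_nat (N + 1) * cnj (u N) * (u N - u (N + 1)) + cnj (u (Suc N)) * L0 u (Suc N)"
    using Suc by simp
  also have "\<dots> = of_real (\<Sum>y<N. real (y + 1) * (norm (u y - u (y + 1)))\<^sup>2)
      + of_nat (N + 1) * of_real ((norm (u N - u (Suc N)))\<^sup>2)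
      + of_nat (Suc N + 1) * cnj (u (Suc N)) * (u (Suc N) - u (Suc N + 1))"
    unfolding square by (simp add: L0_def algebra_simps)
  finally show ?case
    by simp
qed

lemma l2_inner_L0_nonneg:
  assumes u: "u \<in> L0_dom"
  shows "l2_inner u (L0 u) \<in> \<real>\<^sub>\<ge>\<^sub>0"
proof (rule Lim_in_closed_set[OF closed_nonneg_Reals_complex])
  define w where "w x = of_nat x * u x" for x
  define Q where "Q N = (\<Sum>y<N. real (y + 1) * (norm (u y - u (y + 1)))\<^sup>2)" for N
  have u_lim: "u \<longlonglongrightarrow> 0" and w_lim: "w \<longlonglongrightarrow> 0"
    using u unfolding w_def by (simp_all add: L0_dom_iff in_l2_tendsto_zero)
  have "(\<lambda>N. \<Sum>x<Suc N. cnj (u x) * L0 u x) \<longlonglongrightarrow> l2_inner u (L0 u)"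
    unfolding l2_inner_def
    using LIMSEQ_Suc[OF summable_LIMSEQ[OF summable_l2_inner[OF _ in_l2_L0[OF u]]]] u
    by (simp add: L0_dom_iff)
  \<comment> \<open>The boundary term \<open>(N + 1) cnj (u N) (u N - u (N + 1))\<close> vanishes in the limit since
    both \<open>u\<close> and \<open>N u N\<close> are square-summable.\<close>
  moreover have "(\<lambda>N. cnj (w N + u N) * (u N - u (N + 1))) \<longlonglongrightarrow> cnj (0 + 0) * (0 - 0)"
    using LIMSEQ_Suc[OF u_lim] by (intro tendsto_intros u_lim w_lim) simp
  ultimately have "(\<lambda>N. (\<Sum>x<Suc N. cnj (u x) * L0 u x) - cnj (w N + u N) * (u N - u (N + 1)))
      \<longlonglongrightarrow> l2_inner u (L0 u) - 0"
    by (intro tendsto_diff) simp_all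
  moreover have "(\<Sum>x<Suc N. cnj (u x) * L0 u x) - cnj (w N + u N) * (u N - u (N + 1)) = of_real (Q N)" for N
    unfolding sum_cnj_mult_L0 Q_def w_def by (simp add: algebra_simps)
  ultimately show "(\<lambda>N. complex_of_real (Q N)) \<longlonglongrightarrow> l2_inner u (L0 u)"
    by simp
  show "\<forall>\<^sub>F N in sequentially. complex_of_real (Q N) \<in> \<real>\<^sub>\<ge>\<^sub>0"
    unfolding nonneg_Reals_of_real_iff by (intro always_eventually allI) (simp add: Q_def sum_nonneg)
qed simp

lemma L0_closure_graph_diff:
  assumes "L0_closure_graph v f" and "L0_closure_graph v' f'"
  shows "L0_closure_graph (\<lambda>x. v x - v' x) (\<lambda>x. f x - f' x)"
proof -
  obtain u where v: "in_l2 v" "in_l2 f" and u: "\<And>n. u n \<in> L0_dom"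
    and u_v: "(\<lambda>n. l2_norm2 (\<lambda>x. u n x - v x)) \<longlonglongrightarrow> 0"
    and Lu_f: "(\<lambda>n. l2_norm2 (\<lambda>x. L0 (u n) x - f x)) \<longlonglongrightarrow> 0"
    using assms(1) unfolding L0_closure_graph_def by blast
  obtain u' where v': "in_l2 v'" "in_l2 f'" and u': "\<And>n. u' n \<in> L0_dom"
    and u'_v': "(\<lambda>n. l2_norm2 (\<lambda>x. u' n x - v' x)) \<longlonglongrightarrow> 0"
    and Lu'_f': "(\<lambda>n. l2_norm2 (\<lambda>x. L0 (u' n) x - f' x)) \<longlonglongrightarrow> 0"
    using assms(2) unfolding L0_closure_graph_def by blast
  have "(\<lambda>n. l2_norm2 (\<lambda>x. (u n x - v x) - (u' n x - v' x))) \<longlonglongrightarrow> 0"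
    using u u' v v' by (intro tendsto_l2_norm2_diff u_v u'_v' in_l2_diff) (auto simp: L0_dom_iff)
  moreover have "(\<lambda>n. l2_norm2 (\<lambda>x. (L0 (u n) x - f x) - (L0 (u' n) x - f' x))) \<longlonglongrightarrow> 0"
    using u u' v v' by (intro tendsto_l2_norm2_diff Lu_f Lu'_f' in_l2_diff in_l2_L0)
  ultimately show ?thesis
    unfolding L0_closure_graph_def using u u' v v'
    by (intro conjI in_l2_diff exI[of _ "\<lambda>n x. u n x - u' n x"])
       (auto simp: L0_dom_diff L0_diff algebra_simps)
qed

lemma L0_closure_graph_inner_nonneg:
  assumes "L0_closure_graph v f"
  shows "l2_inner v f \<in> \<real>\<^sub>\<ge>\<^sub>0"
proof -
  obtain u where v: "in_l2 v" "in_l2 f" and u: "\<And>n. u n \<in> L0_dom"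
    and u_v: "(\<lambda>n. l2_norm2 (\<lambda>x. u n x - v x)) \<longlonglongrightarrow> 0"
    and Lu_f: "(\<lambda>n. l2_norm2 (\<lambda>x. L0 (u n) x - f x)) \<longlonglongrightarrow> 0"
    using assms unfolding L0_closure_graph_def by blast
  have "(\<lambda>n. l2_inner (u n) (L0 (u n))) \<longlonglongrightarrow> l2_inner v f"
    using u by (intro tendsto_l2_inner v u_v Lu_f in_l2_L0) (simp add: L0_dom_iff)
  moreover have "\<forall>n. l2_inner (u n) (L0 (u n)) \<in> \<real>\<^sub>\<ge>\<^sub>0"
    using l2_inner_L0_nonneg u by blast
  ultimately show ?thesis
    by (intro Lim_in_closed_set[OF closed_nonneg_Reals_complex always_eventually]) auto
qed

text \<open>A non-trivial solution of \<open>L0 v = z v\<close> would make \<open>z \<parallel>v\<parallel>\<^sup>2 = \<langle>v, L0 v\<rangle>\<close> a non-negative real.\<close>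

lemma L0_closure_graph_eigenvector_eq_0:
  assumes z: "z \<notin> complex_of_real ` {0..}" and graph: "L0_closure_graph v (\<lambda>x. z * v x)"
  shows "v = (\<lambda>_. 0)"
proof (rule ccontr)
  assume "v \<noteq> (\<lambda>_. 0)"
  have v: "in_l2 v"
    using graph by (simp add: L0_closure_graph_def)
  then have "l2_norm2 v > 0"
    using \<open>v \<noteq> (\<lambda>_. 0)\<close> l2_norm2_eq_0_iff l2_norm2_nonneg by fastforce
  moreover have "z * of_real (l2_norm2 v) \<in> \<real>\<^sub>\<ge>\<^sub>0"
    using L0_closure_graph_inner_nonneg[OF graph] l2_inner_mult_right_self[OF v] by simp
  ultimately have "z \<in> \<real>\<^sub>\<ge>\<^sub>0"
    using nonneg_Reals_divide_I[of "z * of_real (l2_norm2 v)" "of_real (l2_norm2 v)"] by simp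
  then show False
    using z by (simp add: of_real_atLeast_0_eq_nonneg_Reals)
qed

lemma resolvent_equation_unique:
  assumes "z \<notin> complex_of_real ` {0..}"
    and "L0_closure_graph v (\<lambda>x. chi0 x + z * v x)" and "L0_closure_graph v' (\<lambda>x. chi0 x + z * v' x)"
  shows "v = v'"
proof -
  have "L0_closure_graph (\<lambda>x. v x - v' x) (\<lambda>x. z * (v x - v' x))"
    using L0_closure_graph_diff[OF assms(2,3)] by (simp add: algebra_simps)
  from L0_closure_graph_eigenvector_eq_0[OF assms(1) this] show ?thesis
    by (simp add: fun_eq_iff)
qed

definition cutoff :: "nat \<Rightarrow> nat \<Rightarrow> real" where
  "cutoff m x = max 0 (min 1 (2 - real x / real m))"

lemma cutoff_range: "0 \<le> cutoff m x" "cutoff m x \<le> 1"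
  by (auto simp: cutoff_def)

lemma cutoff_eq_1: "0 < m \<Longrightarrow> x \<le> m \<Longrightarrow> cutoff m x = 1"
  by (auto simp: cutoff_def divide_le_eq)

lemma cutoff_eq_0: "0 < m \<Longrightarrow> 2 * m \<le> x \<Longrightarrow> cutoff m x = 0"
  by (auto simp: cutoff_def le_divide_eq)

lemma cutoff_weighted_diff_le:
  assumes "0 < m"
  shows "real (x + 1) * \<bar>cutoff m (x + 1) - cutoff m x\<bar> \<le> 2"
proof (cases "2 * m \<le> x")
  case True
  then show ?thesis
    using cutoff_eq_0[OF assms] by simp
next
  case False
  have "\<bar>cutoff m (x + 1) - cutoff m x\<bar> \<le> \<bar>real (x + 1) / real m - real x / real m\<bar>"
    unfolding cutoff_def by (auto simp: max_def min_def abs_if)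
  also have "\<dots> = 1 / real m"
    using assms by (simp add: diff_divide_distrib[symmetric])
  finally have "real (x + 1) * \<bar>cutoff m (x + 1) - cutoff m x\<bar> \<le> real (x + 1) * (1 / real m)"
    by (rule mult_left_mono) simp
  also have "\<dots> \<le> 2"
    using False assms by (simp add: divide_le_eq)
  finally show ?thesis .
qed

lemma L0_mult_real:
  "L0 (\<lambda>y. of_real (c y) * v y) x = of_real (c x) * L0 v x
    - of_nat (x + 1) * of_real (c (x + 1) - c x) * v (x + 1) - of_nat x * of_real (c (x - 1) - c x) * v (x - 1)"
  by (simp add: L0_eq algebra_simps)

lemma norm_cutoff_mult_diff_squared_le:
  fixes v :: "nat \<Rightarrow> complex"
  assumes "0 < m"
  shows "(norm (of_real (cutoff m x) * v x - v x))\<^sup>2 \<le> (if m \<le> x then (norm (v x))\<^sup>2 else 0)"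
proof (cases "m \<le> x")
  case True
  have "of_real (cutoff m x) * v x - v x = of_real (cutoff m x - 1) * v x"
    by (simp add: algebra_simps)
  then have "norm (of_real (cutoff m x) * v x - v x) = \<bar>cutoff m x - 1\<bar> * norm (v x)"
    by (simp only: norm_mult norm_of_real)
  also have "\<dots> \<le> norm (v x)"
    using cutoff_range[of m x] by (intro mult_left_le_one_le) auto
  finally show ?thesis
    using True by (simp add: power_mono)
qed (use cutoff_eq_1[OF assms] in simp)

lemma norm_L0_cutoff_diff_squared_le:
  assumes m: "0 < m"
  shows "(norm (L0 (\<lambda>y. of_real (cutoff m y) * v y) x - L0 v x))\<^sup>2
    \<le> (if m \<le> x then 2 * (norm (L0 v x))\<^sup>2 + 16 * (norm (v (x + 1)))\<^sup>2 + 16 * (norm (v (x - 1)))\<^sup>2 else 0)"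
proof (cases "m \<le> x")
  case True
  define r where "r = of_nat (x + 1) * of_real (cutoff m (x + 1) - cutoff m x) * v (x + 1)"
  define l where "l = of_nat x * of_real (cutoff m (x - 1) - cutoff m x) * v (x - 1)"
  have "norm (of_real (cutoff m x - 1) * L0 v x) \<le> norm (L0 v x)"
    unfolding norm_mult norm_of_real using cutoff_range[of m x] by (intro mult_left_le_one_le) auto
  then have main: "(norm (of_real (cutoff m x - 1) * L0 v x))\<^sup>2 \<le> (norm (L0 v x))\<^sup>2"
    by (intro power_mono) auto
  have right: "(norm r)\<^sup>2 \<le> 4 * (norm (v (x + 1)))\<^sup>2"
  proof -
    have "norm r = real (x + 1) * \<bar>cutoff m (x + 1) - cutoff m x\<bar> * norm (v (x + 1))"
      unfolding r_def norm_mult norm_of_real by (simp only: norm_of_nat)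
    also have "\<dots> \<le> 2 * norm (v (x + 1))"
      by (intro mult_right_mono cutoff_weighted_diff_le m) auto
    finally show ?thesis
      by (metis norm_ge_zero power_mono power_mult_distrib four_x_squared)
  qed
  have left: "(norm l)\<^sup>2 \<le> 4 * (norm (v (x - 1)))\<^sup>2"
  proof (cases x)
    case (Suc y)
    have "norm l = real (y + 1) * \<bar>cutoff m (y + 1) - cutoff m y\<bar> * norm (v y)"
      unfolding l_def norm_mult norm_of_real Suc by (simp only: norm_of_nat) (simp add: abs_minus_commute)
    also have "\<dots> \<le> 2 * norm (v y)"
      by (intro mult_right_mono cutoff_weighted_diff_le m) auto
    finally show ?thesis
      using Suc by (metis diff_Suc_1 norm_ge_zero power_mono power_mult_distrib four_x_squared)
  qed (simp add: l_def)
  have "L0 (\<lambda>y. of_real (cutoff m y) * v y) x - L0 v x = of_real (cutoff m x - 1) * L0 v x - (r + l)"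
    unfolding L0_mult_real r_def l_def by (simp add: algebra_simps)
  then have "(norm (L0 (\<lambda>y. of_real (cutoff m y) * v y) x - L0 v x))\<^sup>2
      \<le> 2 * (norm (of_real (cutoff m x - 1) * L0 v x))\<^sup>2 + 4 * (norm r)\<^sup>2 + 4 * (norm l)\<^sup>2"
    using norm_diff_squared_le[of "of_real (cutoff m x - 1) * L0 v x" "r + l"] norm_add_squared_le[of r l]
    by simp
  then show ?thesis
    unfolding if_P[OF True] using main left right by linarith
next
  case False
  then show ?thesis
    using cutoff_eq_1[OF m] by (simp add: L0_mult_real)
qed

lemma L0_closure_graph_if_in_l2:
  assumes v: "in_l2 v" and Lv: "in_l2 (L0 v)"
  shows "L0_closure_graph v (L0 v)"
  unfolding L0_closure_graph_def
proof (intro conjI v Lv exI[of _ "\<lambda>n y. of_real (cutoff (Suc n) y) * v y"] allI)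
  fix n
  have zero: "cutoff (Suc n) x = 0" if "2 * Suc n < x" for x
    using that cutoff_eq_0[of "Suc n" x] by simp
  show "(\<lambda>y. of_real (cutoff (Suc n) y) * v y) \<in> L0_dom"
    unfolding L0_dom_iff by (intro conjI in_l2_finite_support[of "2 * Suc n"]) (simp_all add: zero)
next
  show "(\<lambda>n. l2_norm2 (\<lambda>x. of_real (cutoff (Suc n) x) * v x - v x)) \<longlonglongrightarrow> 0"
    using v unfolding in_l2_def
    by (intro LIMSEQ_Suc[where f = "\<lambda>n. l2_norm2 (\<lambda>x. of_real (cutoff (Suc n) x) * v x - v x)"]
        l2_norm2_tendsto_zero_if_tail_dominated[where H = "\<lambda>x. (norm (v x))\<^sup>2"])
        (simp, rule order_trans[OF norm_cutoff_mult_diff_squared_le], auto)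
next
  have H: "summable (\<lambda>x. 2 * (norm (L0 v x))\<^sup>2 + 16 * (norm (v (x + 1)))\<^sup>2 + 16 * (norm (v (x - 1)))\<^sup>2)"
    using Lv in_l2_shift[OF v] in_l2_shift_back[OF v]
    unfolding in_l2_def by (intro summable_add summable_mult)
  show "(\<lambda>n. l2_norm2 (\<lambda>x. L0 (\<lambda>y. of_real (cutoff (Suc n) y) * v y) x - L0 v x)) \<longlonglongrightarrow> 0"
    by (intro LIMSEQ_Suc[where f = "\<lambda>n. l2_norm2 (\<lambda>x. L0 (\<lambda>y. of_real (cutoff (Suc n) y) * v y) x - L0 v x)"]
        l2_norm2_tendsto_zero_if_tail_dominated[OF H])
       (rule order_trans[OF norm_L0_cutoff_diff_squared_le], auto)
qed

lemma psi_eq_psi_integral: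
  assumes z: "z \<notin> complex_of_real ` {0..}"
  shows "psi z = psi_integral z"
proof -
  have psi_l2: "in_l2 (psi_integral z)"
    using in_l2_laguerre_transform[OF z] by (simp add: psi_integral_eq_laguerre_transform[OF z])
  have L0_psi: "L0 (psi_integral z) = (\<lambda>x. chi0 x + z * psi_integral z x)"
    by (simp add: fun_eq_iff L0_psi_integral[OF z])
  have "in_l2 (L0 (psi_integral z))"
    unfolding L0_psi by (intro in_l2_add in_l2_mult_left psi_l2 in_l2_finite_support[of 0]) (simp add: chi0_def)
  from L0_closure_graph_if_in_l2[OF psi_l2 this]
  have "L0_closure_graph (psi_integral z) (\<lambda>x. chi0 x + z * psi_integral z x)"
    unfolding L0_psi .
  then show ?thesis
    unfolding psi_def by (blast intro: the_equality resolvent_equation_unique[OF z])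
qed

theorem mainTheorem7:
  fixes z :: complex and x :: nat
  assumes "z \<notin> complex_of_real ` {0..}"
  shows "psi z x = exp (- z) *
           (\<Sum>k\<le>x. (-1)^k * of_nat (x choose k) * expint_E (of_nat (k+1)) (- z))"
  using psi_eq_psi_integral[OF assms] expint_sum_eq_psi_integral[OF assms, of x] by simp

end
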